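(* Let $\mathcal{A}=\{A_1,\dots,A_m\}$ be a bimodal collection of pairwise disjoint nonempty subsets of a finite abelian group $G$. For each $j$ let $H_j$ be the internal difference group of $A_j$ and let $a_j+H_j$ be the coset of $H_j$ containing $A_j$. Then $A_k\cap(a_j+H_j)=\emptyset$ for all $k\neq j$.
   Context: $G$ is written additively. The internal difference group of a subset $S\subseteq G$ is the subgroup generated by all $x-y$ with $x,y\in S$; a nonempty $S$ lies in a single coset of it. A collection $\{A_1,\dots,A_m\}$ of pairwise disjoint subsets of $G$ is bimodal if for every $i$ and every $\delta\in G\setminus\{0\}$, the number $N_i(\delta)$ of pairs $(a,b)$ with $a\in A_i$, $b\in A_j$ for some $j\neq i$, and $a-b=\delta$, satisfies $N_i(\delta)\in\{0,|A_i|\}$. *)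

theory Defs
  imports Main
begin

definition add_subgroup :: "'a::ab_group_add set \<Rightarrow> bool" where
  "add_subgroup H \<longleftrightarrow> 0 \<in> H \<and> (\<forall>x\<in>H. \<forall>y\<in>H. x + y \<in> H) \<and> (\<forall>x\<in>H. - x \<in> H)"

definition gen_subgroup :: "'a::ab_group_add set \<Rightarrow> 'a set" where
  "gen_subgroup X = \<Inter> {H. add_subgroup H \<and> X \<subseteq> H}"

definition int_diff_group :: "'a::ab_group_add set \<Rightarrow> 'a set" where
  "int_diff_group S = gen_subgroup {x - y | x y. x \<in> S \<and> y \<in> S}"

definition Ncount :: "'i set \<Rightarrow> ('i \<Rightarrow> 'a::ab_group_add set) \<Rightarrow> 'i \<Rightarrow> 'a \<Rightarrow> nat" where
  "Ncount I A i \<delta> = card {(a, b). a \<in> A i \<and> (\<exists>j\<in>I. j \<noteq> i \<and> b \<in> A j) \<and> a - b = \<delta>}"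

definition bimodal :: "'i set \<Rightarrow> ('i \<Rightarrow> 'a::ab_group_add set) \<Rightarrow> bool" where
  "bimodal I A \<longleftrightarrow>
     (\<forall>i\<in>I. \<forall>j\<in>I. i \<noteq> j \<longrightarrow> A i \<inter> A j = {}) \<and>
     (\<forall>i\<in>I. \<forall>\<delta>. \<delta> \<noteq> 0 \<longrightarrow> Ncount I A i \<delta> \<in> {0, card (A i)})"

end

theory Submission
  imports Defs
begin

text \<open>Let B be the union of the sets A k with k \<noteq> j. Bimodality forces every difference b - a
  with a \<in> A j, b \<in> B to shift all of A j into B, so the set T of shifts t with A j + t \<subseteq> B
  is invariant under the internal difference group H of A j. If some a + h with a \<in> A j,
  h \<in> H lay in B, then h \<in> T and hence 0 = h - h \<in> T, i.e. A j \<subseteq> B, contradicting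
  disjointness.\<close>

lemma gen_subgroup_least:
  assumes "add_subgroup K" and "X \<subseteq> K"
  shows "gen_subgroup X \<subseteq> K"
  using assms unfolding gen_subgroup_def by (intro Inter_lower) simp

definition translation_stabilizer :: "'a::ab_group_add set \<Rightarrow> 'a set" where
  "translation_stabilizer T = {h. \<forall>t. t + h \<in> T \<longleftrightarrow> t \<in> T}"

lemma add_subgroup_translation_stabilizer: "add_subgroup (translation_stabilizer T)"
  unfolding add_subgroup_def translation_stabilizer_def
proof (intro conjI ballI; clarsimp)
  fix x y t
  assume "\<forall>t. t + x \<in> T \<longleftrightarrow> t \<in> T" and "\<forall>t. t + y \<in> T \<longleftrightarrow> t \<in> T"
  then show "t + (x + y) \<in> T \<longleftrightarrow> t \<in> T"
    by (metis add.assoc)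
next
  fix x t
  assume "\<forall>t. t + x \<in> T \<longleftrightarrow> t \<in> T"
  then show "t - x \<in> T \<longleftrightarrow> t \<in> T"
    by (metis diff_add_cancel)
qed

lemma int_diff_group_subset_translation_stabilizer:
  assumes "\<And>t x y. t \<in> T \<Longrightarrow> x \<in> S \<Longrightarrow> y \<in> S \<Longrightarrow> t + (x - y) \<in> T"
  shows "int_diff_group S \<subseteq> translation_stabilizer T"
  unfolding int_diff_group_def
proof (rule gen_subgroup_least[OF add_subgroup_translation_stabilizer], safe)
  fix x y assume x: "x \<in> S" and y: "y \<in> S"
  have "t \<in> T" if "t + (x - y) \<in> T" for t
    using assms[OF that y x] by (simp add: algebra_simps)
  then show "x - y \<in> translation_stabilizer T"
    using assms x y unfolding translation_stabilizer_def by blast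
qed

text \<open>The pairs counted by N_j(a - b) are determined by their first entry; since a itself
  occurs, bimodality says every element of A j occurs.\<close>

lemma bimodal_shift_into_others:
  fixes A :: "'i \<Rightarrow> 'a::{ab_group_add, finite} set"
  assumes bim: "bimodal I A" and "j \<in> I" "k \<in> I" "k \<noteq> j"
    and a: "a \<in> A j" and b: "b \<in> A k" and z: "z \<in> A j"
  shows "z + (b - a) \<in> \<Union> (A ` (I - {j}))"
proof -
  define B where "B = \<Union> (A ` (I - {j}))"
  define S where "S = {p \<in> A j. p + (b - a) \<in> B}"
  have "A j \<inter> A k = {}"
    using bim assms(2-4) unfolding bimodal_def by auto
  then have "a - b \<noteq> 0"
    using a b by auto
  then have N: "Ncount I A j (a - b) \<in> {0, card (A j)}"
    using bim \<open>j \<in> I\<close> unfolding bimodal_def by auto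
  have pairs: "{(p, q). p \<in> A j \<and> (\<exists>i\<in>I. i \<noteq> j \<and> q \<in> A i) \<and> p - q = a - b}
      = (\<lambda>p. (p, p + (b - a))) ` S"
    unfolding S_def B_def by (auto simp: algebra_simps image_iff)
  have "card S = Ncount I A j (a - b)"
    unfolding Ncount_def pairs by (simp add: card_image inj_on_def)
  moreover have "a \<in> S"
    unfolding S_def B_def using a b assms(3,4) by auto
  ultimately have "card S = card (A j)"
    using N by (auto simp: card_eq_0_iff)
  then have "S = A j"
    by (simp add: S_def card_subset_eq)
  then show ?thesis
    using z unfolding S_def B_def by auto
qed

lemma bimodal_disjoint_coset:
  fixes A :: "'i \<Rightarrow> 'a::{ab_group_add, finite} set"
  assumes bim: "bimodal I A" and j: "j \<in> I" and k: "k \<in> I" "k \<noteq> j" and a: "a \<in> A j"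
  shows "A k \<inter> (\<lambda>h. a + h) ` int_diff_group (A j) = {}"
proof (rule ccontr)
  define B where "B = \<Union> (A ` (I - {j}))"
  define T where "T = {t. \<forall>z\<in>A j. z + t \<in> B}"
  have shift: "b - x \<in> T" if "x \<in> A j" "b \<in> B" for x b
    using bimodal_shift_into_others[OF bim j] that unfolding T_def B_def by blast
  have "t + (x - y) \<in> T" if "t \<in> T" "x \<in> A j" "y \<in> A j" for t x y
  proof -
    have "x + t \<in> B"
      using that unfolding T_def by blast
    from shift[OF \<open>y \<in> A j\<close> this] show ?thesis
      by (simp add: algebra_simps)
  qed
  then have stab: "int_diff_group (A j) \<subseteq> translation_stabilizer T"
    by (rule int_diff_group_subset_translation_stabilizer)
  assume "A k \<inter> (\<lambda>h. a + h) ` int_diff_group (A j) \<noteq> {}"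
  then obtain h where h: "h \<in> int_diff_group (A j)" "a + h \<in> A k"
    by auto
  have "h \<in> T"
    using shift[OF a, of "a + h"] h(2) k unfolding B_def by auto
  moreover have "0 + h \<in> T \<longleftrightarrow> 0 \<in> T"
    using stab h(1) unfolding translation_stabilizer_def by blast
  ultimately have "0 \<in> T"
    by simp
  then obtain i where "i \<in> I" "i \<noteq> j" "a \<in> A i"
    using a unfolding T_def B_def by auto
  then show False
    using bim j a unfolding bimodal_def by blast
qed

theorem lemma3p2:
  fixes A :: "nat \<Rightarrow> 'a::{ab_group_add, finite} set" and m :: nat
  assumes "\<forall>i<m. \<forall>j<m. i \<noteq> j \<longrightarrow> A i \<inter> A j = {}"
    and "\<forall>i<m. A i \<noteq> {}"
    and "bimodal {..<m} A"
  shows "\<forall>j<m. \<forall>k<m. k \<noteq> j \<longrightarrow>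
           (\<forall>a\<in>A j. A k \<inter> (\<lambda>h. a + h) ` int_diff_group (A j) = {})"
  using bimodal_disjoint_coset[OF assms(3)] by simp

end
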